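(* Let $R$ be a ring. Then $R$ is feckly clean if and only if for any two distinct maximal ideals $M$ and $N$ of $R$ there exists $e\in R$ such that $e\in M$, $1-e\in N$ and $eR(1-e)\subseteq J(R)$.
   Context: Rings are associative with identity, not necessarily commutative; $J(R)$ is the Jacobson radical; maximal ideals are two-sided. An element $u\in R$ is full if $RuR=R$. An element $a\in R$ is feckly clean if there exist $e\in R$ and a full element $u\in R$ with $a=e+u$ and $eR(1-e)\subseteq J(R)$; $R$ is feckly clean if every element is feckly clean. *)

theory Defs
  imports Main
begin

definition two_sided_ideal :: "'a::ring_1 set \<Rightarrow> bool" where
  "two_sided_ideal I \<longleftrightarrow> 0 \<in> I \<and> (\<forall>x\<in>I. \<forall>y\<in>I. x - y \<in> I)
     \<and> (\<forall>r x. x \<in> I \<longrightarrow> r * x \<in> I \<and> x * r \<in> I)"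

definition maximal_ideal :: "'a::ring_1 set \<Rightarrow> bool" where
  "maximal_ideal M \<longleftrightarrow> two_sided_ideal M \<and> M \<noteq> UNIV
     \<and> (\<forall>I. two_sided_ideal I \<and> M \<subseteq> I \<longrightarrow> I = M \<or> I = UNIV)"

definition left_ideal :: "'a::ring_1 set \<Rightarrow> bool" where
  "left_ideal I \<longleftrightarrow> 0 \<in> I \<and> (\<forall>x\<in>I. \<forall>y\<in>I. x - y \<in> I)
     \<and> (\<forall>r x. x \<in> I \<longrightarrow> r * x \<in> I)"

definition maximal_left_ideal :: "'a::ring_1 set \<Rightarrow> bool" where
  "maximal_left_ideal M \<longleftrightarrow> left_ideal M \<and> M \<noteq> UNIV
     \<and> (\<forall>I. left_ideal I \<and> M \<subseteq> I \<longrightarrow> I = M \<or> I = UNIV)"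

definition jacobson :: "'a::ring_1 set" where
  "jacobson = \<Inter>{M. maximal_left_ideal M}"

text \<open>RuR: the two-sided ideal generated by u (finite sums of r*u*s).\<close>
definition RuR :: "'a::ring_1 \<Rightarrow> 'a set" where
  "RuR u = {x. \<exists>n (r::nat \<Rightarrow> 'a) s. x = (\<Sum>i<n. r i * u * s i)}"

definition full :: "'a::ring_1 \<Rightarrow> bool" where
  "full u \<longleftrightarrow> RuR u = UNIV"

definition feckly_clean_elem :: "'a::ring_1 \<Rightarrow> bool" where
  "feckly_clean_elem a \<longleftrightarrow> (\<exists>e u. full u \<and> a = e + u \<and> (\<forall>r. e * r * (1 - e) \<in> jacobson))"

definition feckly_clean :: "'a::ring_1 itself \<Rightarrow> bool" where
  "feckly_clean _ \<longleftrightarrow> (\<forall>a::'a. feckly_clean_elem a)"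

end

theory Submission
  imports Defs
begin

text \<open>
  Call \<open>e\<close> right semicentral modulo \<open>J(R)\<close> if \<open>eR(1 - e) \<subseteq> J(R)\<close>. Since \<open>J(R)\<close> lies in every
  maximal ideal \<open>P\<close>, such an \<open>e\<close> satisfies \<open>e \<in> P\<close> or \<open>1 - e \<in> P\<close>, and an element is full iff it
  lies in no maximal ideal. Hence \<open>a = e + (a - e)\<close> is a feckly clean decomposition as soon as
  \<open>e\<close> lies in every maximal ideal containing \<open>a - 1\<close> and \<open>1 - e\<close> in every maximal ideal
  containing \<open>a\<close>: the element \<open>e\<close> has to separate two disjoint closed subsets of the maximal
  spectrum. The right semicentral elements are closed under \<open>e f\<close> and \<open>e + f - e f\<close>, and the
  maximal spectrum is quasi-compact, so the separation of pairs of points assumed in the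
  criterion extends first to a point versus a closed set and then to two closed sets.
  Conversely, splitting \<open>1 - m\<close> with \<open>m \<in> M\<close>, \<open>1 - m \<in> N\<close> gives the separating element.
\<close>

lemma two_sided_ideal_iff_left_ideal:
  "two_sided_ideal I \<longleftrightarrow> left_ideal I \<and> (\<forall>r x. x \<in> I \<longrightarrow> x * r \<in> I)"
  by (auto simp: two_sided_ideal_def left_ideal_def)

lemma left_ideal_zero: "left_ideal I \<Longrightarrow> 0 \<in> I"
  and left_ideal_diff: "left_ideal I \<Longrightarrow> x \<in> I \<Longrightarrow> y \<in> I \<Longrightarrow> x - y \<in> I"
  and left_ideal_mult_left: "left_ideal I \<Longrightarrow> x \<in> I \<Longrightarrow> r * x \<in> I"
  by (auto simp: left_ideal_def)

lemma left_ideal_add: "left_ideal I \<Longrightarrow> x \<in> I \<Longrightarrow> y \<in> I \<Longrightarrow> x + y \<in> I"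
  using left_ideal_diff[of I x "- y"] left_ideal_mult_left[of I y "- 1"] by simp

lemma left_ideal_eq_UNIV: "left_ideal I \<Longrightarrow> 1 \<in> I \<Longrightarrow> I = UNIV"
  using left_ideal_mult_left[of I 1] by auto

lemma two_sided_ideal_zero: "two_sided_ideal I \<Longrightarrow> 0 \<in> I"
  and two_sided_ideal_diff: "two_sided_ideal I \<Longrightarrow> x \<in> I \<Longrightarrow> y \<in> I \<Longrightarrow> x - y \<in> I"
  and two_sided_ideal_mult_left: "two_sided_ideal I \<Longrightarrow> x \<in> I \<Longrightarrow> r * x \<in> I"
  and two_sided_ideal_mult_right: "two_sided_ideal I \<Longrightarrow> x \<in> I \<Longrightarrow> x * r \<in> I"
  by (auto simp: two_sided_ideal_def)

lemma two_sided_ideal_add: "two_sided_ideal I \<Longrightarrow> x \<in> I \<Longrightarrow> y \<in> I \<Longrightarrow> x + y \<in> I"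
  and two_sided_ideal_eq_UNIV: "two_sided_ideal I \<Longrightarrow> 1 \<in> I \<Longrightarrow> I = UNIV"
  by (simp_all add: two_sided_ideal_iff_left_ideal left_ideal_add left_ideal_eq_UNIV)

lemma two_sided_ideal_sum:
  "two_sided_ideal I \<Longrightarrow> (\<And>i. i < n \<Longrightarrow> f i \<in> I) \<Longrightarrow> (\<Sum>i<(n::nat). f i) \<in> I"
  by (induction n) (auto simp: two_sided_ideal_zero two_sided_ideal_add)

lemma maximal_ideal_two_sided: "maximal_ideal P \<Longrightarrow> two_sided_ideal P"
  by (simp add: maximal_ideal_def)

lemma maximal_ideal_one: "maximal_ideal P \<Longrightarrow> 1 \<notin> P"
  using two_sided_ideal_eq_UNIV by (auto simp: maximal_ideal_def)

lemma maximal_ideal_not_both: "maximal_ideal P \<Longrightarrow> x \<in> P \<Longrightarrow> 1 - x \<in> P \<Longrightarrow> False"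
  using two_sided_ideal_add[of P x "1 - x"] maximal_ideal_one[of P] maximal_ideal_two_sided[of P]
  by simp

lemma two_sided_ideal_plus:
  assumes I: "two_sided_ideal I" and J: "two_sided_ideal J"
  shows "two_sided_ideal {i + j |i j. i \<in> I \<and> j \<in> J}" (is "two_sided_ideal ?S")
  unfolding two_sided_ideal_def
proof (intro conjI ballI allI impI)
  have "(0::'a) = 0 + 0" by simp
  then show "0 \<in> ?S" using two_sided_ideal_zero[OF I] two_sided_ideal_zero[OF J] by blast
next
  fix x y assume "x \<in> ?S" "y \<in> ?S"
  then obtain i j i' j' where "i \<in> I" "j \<in> J" "i' \<in> I" "j' \<in> J" "x = i + j" "y = i' + j'" by blast
  moreover have "i + j - (i' + j') = (i - i') + (j - j')" by simp
  ultimately show "x - y \<in> ?S" using two_sided_ideal_diff[OF I] two_sided_ideal_diff[OF J] by blast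
next
  fix r x assume "x \<in> ?S"
  then obtain i j where ij: "i \<in> I" "j \<in> J" "x = i + j" by blast
  have "r * x = r * i + r * j" "x * r = i * r + j * r" using ij(3) by (simp_all add: algebra_simps)
  then show "r * x \<in> ?S" "x * r \<in> ?S"
    using ij(1,2) two_sided_ideal_mult_left[OF I] two_sided_ideal_mult_left[OF J]
      two_sided_ideal_mult_right[OF I] two_sided_ideal_mult_right[OF J] by blast+
qed

lemma maximal_ideals_comaximal:
  assumes M: "maximal_ideal M" and N: "maximal_ideal N" and "M \<noteq> N"
  obtains m where "m \<in> M" "1 - m \<in> N"
proof -
  let ?S = "{m + n |m n. m \<in> M \<and> n \<in> N}"
  have tM: "two_sided_ideal M" and tN: "two_sided_ideal N"
    using M N by (simp_all add: maximal_ideal_two_sided)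
  have "M \<subseteq> ?S"
  proof
    fix m assume "m \<in> M"
    moreover have "m = m + 0" by simp
    ultimately show "m \<in> ?S" using two_sided_ideal_zero[OF tN] by blast
  qed
  moreover have "?S \<noteq> M"
  proof
    assume "?S = M"
    have "N \<subseteq> M"
    proof
      fix n assume "n \<in> N"
      moreover have "n = 0 + n" by simp
      ultimately show "n \<in> M" using two_sided_ideal_zero[OF tM] \<open>?S = M\<close> by blast
    qed
    then show False using M N \<open>M \<noteq> N\<close> unfolding maximal_ideal_def by blast
  qed
  ultimately have "?S = UNIV" using M two_sided_ideal_plus[OF tM tN] unfolding maximal_ideal_def by blast
  then obtain m n where "m \<in> M" "n \<in> N" "1 = m + n" by blast
  then show thesis using that[of m] by (metis add_diff_cancel_left')
qed

lemma left_ideal_chain_Union: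
  assumes "\<forall>I\<in>C. left_ideal I" "C \<noteq> {}" "\<forall>X\<in>C. \<forall>Y\<in>C. X \<subseteq> Y \<or> Y \<subseteq> X"
  shows "left_ideal (\<Union>C)"
  unfolding left_ideal_def
proof (intro conjI ballI allI impI)
  show "0 \<in> \<Union>C" using assms(1,2) left_ideal_zero by blast
  fix x y assume "x \<in> \<Union>C" "y \<in> \<Union>C"
  then obtain X Y where "X \<in> C" "Y \<in> C" "x \<in> X" "y \<in> Y" by blast
  with assms(1,3) show "x - y \<in> \<Union>C" by (metis UnionI left_ideal_diff subsetD)
next
  fix r x assume "x \<in> \<Union>C"
  with assms(1) show "r * x \<in> \<Union>C" using left_ideal_mult_left by blast
qed

lemma two_sided_ideal_chain_Union:
  "\<forall>I\<in>C. two_sided_ideal I \<Longrightarrow> C \<noteq> {} \<Longrightarrow> \<forall>X\<in>C. \<forall>Y\<in>C. X \<subseteq> Y \<or> Y \<subseteq> X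
    \<Longrightarrow> two_sided_ideal (\<Union>C)"
  unfolding two_sided_ideal_iff_left_ideal using left_ideal_chain_Union[of C] by blast

lemma proper_ideal_extends_to_maximal:
  fixes Q :: "'a::ring_1 set \<Rightarrow> bool"
  assumes chain: "\<And>C. \<forall>I\<in>C. Q I \<Longrightarrow> C \<noteq> {} \<Longrightarrow> \<forall>X\<in>C. \<forall>Y\<in>C. X \<subseteq> Y \<or> Y \<subseteq> X \<Longrightarrow> Q (\<Union>C)"
    and proper: "\<And>I. Q I \<Longrightarrow> 1 \<in> I \<Longrightarrow> I = UNIV"
    and "Q I\<^sub>0" "1 \<notin> I\<^sub>0"
  obtains M where "Q M" "I\<^sub>0 \<subseteq> M" "M \<noteq> UNIV" "\<forall>I. Q I \<and> M \<subseteq> I \<longrightarrow> I = M \<or> I = UNIV"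
proof -
  let ?A = "{I. Q I \<and> I\<^sub>0 \<subseteq> I \<and> 1 \<notin> I}"
  have "\<exists>M\<in>?A. \<forall>X\<in>?A. M \<subseteq> X \<longrightarrow> X = M"
  proof (rule subset_Zorn_nonempty)
    show "?A \<noteq> {}" using assms(3,4) by blast
    fix C assume "C \<noteq> {}" "subset.chain ?A C"
    then show "\<Union>C \<in> ?A" using chain[of C] by (auto simp: subset_chain_def)
  qed
  then obtain M where "M \<in> ?A" "\<forall>X\<in>?A. M \<subseteq> X \<longrightarrow> X = M" by blast
  with proper show thesis by (intro that) blast+
qed

lemma maximal_ideal_exists:
  fixes I :: "'a::ring_1 set"
  assumes "two_sided_ideal I" "1 \<notin> I"
  obtains M where "maximal_ideal M" "I \<subseteq> M"
proof -
  have "\<exists>M. two_sided_ideal M \<and> I \<subseteq> M \<and> M \<noteq> UNIV \<and> (\<forall>J. two_sided_ideal J \<and> M \<subseteq> J \<longrightarrow> J = M \<or> J = UNIV)"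
    by (rule proper_ideal_extends_to_maximal[of two_sided_ideal I])
      (use two_sided_ideal_chain_Union two_sided_ideal_eq_UNIV assms in blast)+
  then show thesis using that unfolding maximal_ideal_def by blast
qed

lemma maximal_left_ideal_exists:
  fixes I :: "'a::ring_1 set"
  assumes "left_ideal I" "1 \<notin> I"
  obtains M where "maximal_left_ideal M" "I \<subseteq> M"
proof -
  have "\<exists>M. left_ideal M \<and> I \<subseteq> M \<and> M \<noteq> UNIV \<and> (\<forall>J. left_ideal J \<and> M \<subseteq> J \<longrightarrow> J = M \<or> J = UNIV)"
    by (rule proper_ideal_extends_to_maximal[of left_ideal I])
      (use left_ideal_chain_Union left_ideal_eq_UNIV assms in blast)+
  then show thesis using that unfolding maximal_left_ideal_def by blast
qed

lemma maximal_left_ideal_comaximal: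
  assumes L: "maximal_left_ideal L" and w: "w \<notin> L"
  obtains t where "1 - t * w \<in> L"
proof -
  have lL: "left_ideal L" using L by (simp add: maximal_left_ideal_def)
  let ?L' = "{l + t * w | l t. l \<in> L}"
  have "left_ideal ?L'"
    unfolding left_ideal_def
  proof (intro conjI ballI allI impI)
    have "0 = 0 + 0 * w" by simp
    then show "0 \<in> ?L'" using left_ideal_zero[OF lL] by blast
  next
    fix x y assume "x \<in> ?L'" "y \<in> ?L'"
    then obtain l\<^sub>1 t\<^sub>1 l\<^sub>2 t\<^sub>2 where "l\<^sub>1 \<in> L" "l\<^sub>2 \<in> L" "x = l\<^sub>1 + t\<^sub>1 * w" "y = l\<^sub>2 + t\<^sub>2 * w" by blast
    then have "x - y = (l\<^sub>1 - l\<^sub>2) + (t\<^sub>1 - t\<^sub>2) * w" "l\<^sub>1 - l\<^sub>2 \<in> L"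
      using left_ideal_diff[OF lL] by (auto simp: algebra_simps)
    then show "x - y \<in> ?L'" by blast
  next
    fix s x assume "x \<in> ?L'"
    then obtain l t where "l \<in> L" "x = l + t * w" by blast
    then have "s * x = s * l + (s * t) * w" "s * l \<in> L"
      using left_ideal_mult_left[OF lL] by (auto simp: algebra_simps)
    then show "s * x \<in> ?L'" by blast
  qed
  moreover have "L \<subseteq> ?L'" by (force intro: exI[of _ 0])
  moreover have "w = 0 + 1 * w" by simp
  then have "w \<in> ?L'" using left_ideal_zero[OF lL] by blast
  ultimately have "?L' = UNIV" using L w unfolding maximal_left_ideal_def by blast
  then obtain l t where "l \<in> L" "1 = l + t * w" by blast
  then show thesis using that[of t] add_diff_cancel_right' by metis
qed

lemma maximal_left_ideal_quotient:
  fixes L :: "'a::ring_1 set"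
  assumes L: "maximal_left_ideal L" and proper: "{y. y * r \<in> L} \<noteq> UNIV"
  shows "maximal_left_ideal {y. y * r \<in> L}"
proof -
  let ?K = "{y. y * r \<in> L}"
  have lL: "left_ideal L" using L by (simp add: maximal_left_ideal_def)
  have lK: "left_ideal ?K"
    using lL by (auto simp: left_ideal_def left_diff_distrib mult.assoc)
  have "I = UNIV" if I: "left_ideal I" "?K \<subseteq> I" "I \<noteq> ?K" for I
  proof -
    obtain i where i: "i \<in> I" "i * r \<notin> L" using I by blast
    then obtain t where t: "1 - t * (i * r) \<in> L"
      using maximal_left_ideal_comaximal[OF L] by blast
    have "y \<in> I" for y
    proof -
      have "(y - y * r * t * i) * r = y * r * (1 - t * (i * r))" by (simp add: algebra_simps)
      then have "y - y * r * t * i \<in> I" using I(2) left_ideal_mult_left[OF lL t] by auto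
      moreover have "y * r * t * i \<in> I" using left_ideal_mult_left[OF I(1) i(1)] .
      ultimately have "(y - y * r * t * i) + y * r * t * i \<in> I" by (rule left_ideal_add[OF I(1)])
      then show ?thesis by simp
    qed
    then show "I = UNIV" by blast
  qed
  then show ?thesis using lK proper unfolding maximal_left_ideal_def by blast
qed

lemma jacobson_mult_right:
  assumes j: "j \<in> jacobson"
  shows "j * r \<in> jacobson"
proof -
  have "j * r \<in> L" if L: "maximal_left_ideal L" for L
  proof (cases "{y. y * r \<in> L} = UNIV")
    case False
    then have "maximal_left_ideal {y. y * r \<in> L}" by (rule maximal_left_ideal_quotient[OF L])
    then show ?thesis using j unfolding jacobson_def by blast
  qed blast
  then show ?thesis unfolding jacobson_def by blast
qed

lemma left_ideal_Inter: "(\<And>I. I \<in> S \<Longrightarrow> left_ideal I) \<Longrightarrow> left_ideal (\<Inter>S)"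
  unfolding left_ideal_def by blast

lemma jacobson_two_sided_ideal: "two_sided_ideal (jacobson :: 'a::ring_1 set)"
  unfolding two_sided_ideal_iff_left_ideal
  using left_ideal_Inter[of "{M. maximal_left_ideal M}"] jacobson_mult_right
  by (auto simp: jacobson_def maximal_left_ideal_def)

lemma two_sided_ideal_right_quotient:
  assumes L: "left_ideal L"
  shows "two_sided_ideal {x. \<forall>r. x * r * a \<in> L}" (is "two_sided_ideal ?Q")
  unfolding two_sided_ideal_def
proof (intro conjI ballI allI impI)
  show "0 \<in> ?Q" using left_ideal_zero[OF L] by simp
next
  fix x y assume "x \<in> ?Q" "y \<in> ?Q"
  then show "x - y \<in> ?Q" using left_ideal_diff[OF L] by (simp add: left_diff_distrib)
next
  fix t x assume "x \<in> ?Q"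
  then show "t * x \<in> ?Q" using left_ideal_mult_left[OF L] by (simp add: mult.assoc)
next
  fix t x assume x: "x \<in> ?Q"
  show "x * t \<in> ?Q"
  proof (intro CollectI allI)
    fix r
    have "x * (t * r) * a \<in> L" using x by blast
    then show "x * t * r * a \<in> L" by (simp add: mult.assoc)
  qed
qed

text \<open>
  The largest two-sided ideal inside a maximal left ideal \<open>L \<supseteq> P\<close> is \<open>P\<close> itself, and it
  contains \<open>J(R)\<close> because \<open>J(R)\<close> is a two-sided ideal inside \<open>L\<close>.
\<close>

lemma jacobson_subset_maximal_ideal:
  fixes P :: "'a::ring_1 set"
  assumes P: "maximal_ideal P"
  shows "jacobson \<subseteq> P"
proof -
  have tP: "two_sided_ideal P" using P by (rule maximal_ideal_two_sided)
  obtain L where L: "maximal_left_ideal L" "P \<subseteq> L"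
    using maximal_left_ideal_exists[of P] tP maximal_ideal_one[OF P]
    by (auto simp: two_sided_ideal_iff_left_ideal)
  have lL: "left_ideal L" using L by (simp add: maximal_left_ideal_def)
  let ?C = "{x. \<forall>r. x * r \<in> L}"
  have "two_sided_ideal ?C" using two_sided_ideal_right_quotient[OF lL, of 1] by simp
  moreover have "P \<subseteq> ?C" using L(2) two_sided_ideal_mult_right[OF tP] by blast
  moreover have "1 \<notin> ?C" using L(1) left_ideal_eq_UNIV[OF lL] by (auto simp: maximal_left_ideal_def)
  ultimately have "?C = P" using P unfolding maximal_ideal_def by blast
  moreover have "jacobson \<subseteq> ?C" using L(1) jacobson_mult_right by (auto simp: jacobson_def)
  ultimately show ?thesis by blast
qed

lemma RuR_I: "x = (\<Sum>i<(n::nat). r i * u * s i) \<Longrightarrow> x \<in> RuR u"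
  unfolding RuR_def by blast

lemma sum_lessThan_add_nat: "(\<Sum>i<n + (m::nat). f i) = (\<Sum>i<n. f i) + (\<Sum>i<m. f (n + i))"
  by (induction m) (simp_all add: add.assoc)

lemma RuR_two_sided_ideal: "two_sided_ideal (RuR u)"
proof -
  have mult: "t * x \<in> RuR u \<and> x * t \<in> RuR u" if x: "x \<in> RuR u" for t x
  proof -
    obtain n :: nat and r s where "x = (\<Sum>i<n. r i * u * s i)" using x unfolding RuR_def by blast
    then have "t * x = (\<Sum>i<n. (t * r i) * u * s i)" "x * t = (\<Sum>i<n. r i * u * (s i * t))"
      by (simp_all add: sum_distrib_left sum_distrib_right mult.assoc)
    then show ?thesis by (simp add: RuR_I)
  qed
  have add: "x + y \<in> RuR u" if xy: "x \<in> RuR u" "y \<in> RuR u" for x y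
  proof -
    obtain n :: nat and r s where x: "x = (\<Sum>i<n. r i * u * s i)" using xy(1) unfolding RuR_def by blast
    obtain m :: nat and r' s' where y: "y = (\<Sum>i<m. r' i * u * s' i)" using xy(2) unfolding RuR_def by blast
    let ?r = "\<lambda>i. if i < n then r i else r' (i - n)"
    let ?s = "\<lambda>i. if i < n then s i else s' (i - n)"
    have "x + y = (\<Sum>i<n + m. ?r i * u * ?s i)" unfolding x y sum_lessThan_add_nat by simp
    then show ?thesis by (rule RuR_I)
  qed
  have "0 \<in> RuR u" by (rule RuR_I[where n = 0]) simp
  moreover have "x - y \<in> RuR u" if "x \<in> RuR u" "y \<in> RuR u" for x y
    using add[OF that(1) conjunct1[OF mult[OF that(2), of "- 1"]]] by simp
  ultimately show ?thesis using mult unfolding two_sided_ideal_def by blast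
qed

lemma mem_RuR: "u \<in> RuR u"
  by (rule RuR_I[where n = 1 and r = "\<lambda>_. 1" and s = "\<lambda>_. 1"]) simp

lemma full_iff_not_in_maximal_ideal: "full u \<longleftrightarrow> (\<forall>P. maximal_ideal P \<longrightarrow> u \<notin> P)"
proof
  assume "full u"
  show "\<forall>P. maximal_ideal P \<longrightarrow> u \<notin> P"
  proof (intro allI impI notI)
    fix P assume P: "maximal_ideal P" and "u \<in> P"
    have tP: "two_sided_ideal P" using P by (rule maximal_ideal_two_sided)
    have "(\<Sum>i<n. r i * u * s i) \<in> P" for n :: nat and r s
      using two_sided_ideal_mult_right[OF tP two_sided_ideal_mult_left[OF tP \<open>u \<in> P\<close>]]
      by (blast intro: two_sided_ideal_sum[OF tP])
    then have "RuR u \<subseteq> P" unfolding RuR_def by blast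
    with \<open>full u\<close> maximal_ideal_one[OF P] show False by (auto simp: full_def)
  qed
next
  assume none: "\<forall>P. maximal_ideal P \<longrightarrow> u \<notin> P"
  show "full u"
  proof (rule ccontr)
    assume "\<not> full u"
    then have "1 \<notin> RuR u" using two_sided_ideal_eq_UNIV[OF RuR_two_sided_ideal] by (auto simp: full_def)
    then obtain P where "maximal_ideal P" "RuR u \<subseteq> P"
      by (rule maximal_ideal_exists[OF RuR_two_sided_ideal])
    then show False using none mem_RuR by blast
  qed
qed

inductive_set ideal_generated :: "'a::ring_1 set \<Rightarrow> 'a set" for X where
  zero: "0 \<in> ideal_generated X"
| base: "x \<in> X \<Longrightarrow> x \<in> ideal_generated X"
| diff: "x \<in> ideal_generated X \<Longrightarrow> y \<in> ideal_generated X \<Longrightarrow> x - y \<in> ideal_generated X"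
| mult_left: "x \<in> ideal_generated X \<Longrightarrow> r * x \<in> ideal_generated X"
| mult_right: "x \<in> ideal_generated X \<Longrightarrow> x * r \<in> ideal_generated X"

lemma two_sided_ideal_ideal_generated: "two_sided_ideal (ideal_generated X)"
  by (auto simp: two_sided_ideal_def intro: ideal_generated.intros)

lemma ideal_generated_least:
  assumes "two_sided_ideal I" "X \<subseteq> I"
  shows "ideal_generated X \<subseteq> I"
proof
  fix x assume "x \<in> ideal_generated X"
  then show "x \<in> I"
    by induction (use assms in \<open>auto intro: two_sided_ideal_zero two_sided_ideal_diff
        two_sided_ideal_mult_left two_sided_ideal_mult_right\<close>)
qed

lemma ideal_generated_mono: "X \<subseteq> Y \<Longrightarrow> ideal_generated X \<subseteq> ideal_generated Y"
  by (meson ideal_generated.base ideal_generated_least subset_iff two_sided_ideal_ideal_generated)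

lemma ideal_generated_finite_subset:
  "x \<in> ideal_generated X \<Longrightarrow> \<exists>F. finite F \<and> F \<subseteq> X \<and> x \<in> ideal_generated F"
proof (induction rule: ideal_generated.induct)
  case zero
  then show ?case using ideal_generated.zero by blast
next
  case (base x)
  then show ?case using ideal_generated.base[of x "{x}"] by blast
next
  case (diff x y)
  then obtain F G where "finite F" "F \<subseteq> X" "x \<in> ideal_generated F"
    "finite G" "G \<subseteq> X" "y \<in> ideal_generated G" by blast
  then show ?case
    using ideal_generated_mono[of F "F \<union> G"] ideal_generated_mono[of G "F \<union> G"]
    by (intro exI[of _ "F \<union> G"]) (auto intro: ideal_generated.diff)
qed (blast intro: ideal_generated.mult_left ideal_generated.mult_right)+

lemma maximal_ideals_finite_subcover:
  fixes x :: "'a::ring_1"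
  assumes cover: "\<And>P. maximal_ideal P \<Longrightarrow> x \<in> P \<Longrightarrow> \<exists>i\<in>I. h i \<notin> P"
  shows "\<exists>I'. finite I' \<and> I' \<subseteq> I \<and> (\<forall>P. maximal_ideal P \<and> x \<in> P \<longrightarrow> (\<exists>i\<in>I'. h i \<notin> P))"
proof -
  let ?X = "insert x (h ` I)"
  have "1 \<in> ideal_generated ?X"
  proof (rule ccontr)
    assume "1 \<notin> ideal_generated ?X"
    then obtain P where P: "maximal_ideal P" "ideal_generated ?X \<subseteq> P"
      by (rule maximal_ideal_exists[OF two_sided_ideal_ideal_generated])
    have "?X \<subseteq> ideal_generated ?X" by (rule subsetI) (rule ideal_generated.base)
    then have "x \<in> P" "\<forall>i\<in>I. h i \<in> P" using P(2) by auto
    then show False using cover[OF P(1)] by blast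
  qed
  then obtain F where F: "finite F" "F \<subseteq> ?X" "1 \<in> ideal_generated F"
    using ideal_generated_finite_subset by blast
  have "finite (F - {x})" "F - {x} \<subseteq> h ` I" using F(1,2) by auto
  from finite_subset_image[OF this] obtain I' where I': "I' \<subseteq> I" "finite I'" "F - {x} = h ` I'"
    by blast
  have "\<exists>i\<in>I'. h i \<notin> P" if P: "maximal_ideal P" "x \<in> P" for P
  proof (rule ccontr)
    assume "\<not> (\<exists>i\<in>I'. h i \<notin> P)"
    then have "F - {x} \<subseteq> P" unfolding I'(3) by blast
    then have "F \<subseteq> P" using P(2) by blast
    then have "1 \<in> P"
      using ideal_generated_least[OF maximal_ideal_two_sided[OF P(1)]] F(3) by blast
    then show False using maximal_ideal_one[OF P(1)] by blast
  qed
  then show ?thesis using I' by blast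
qed

definition right_semicentral_mod_jacobson :: "'a::ring_1 \<Rightarrow> bool" where
  "right_semicentral_mod_jacobson e \<longleftrightarrow> (\<forall>r. e * r * (1 - e) \<in> jacobson)"

lemma right_semicentral_mod_jacobson_mem_or_one_minus_mem:
  fixes P :: "'a::ring_1 set"
  assumes P: "maximal_ideal P" and e: "right_semicentral_mod_jacobson e"
  shows "e \<in> P \<or> 1 - e \<in> P"
proof (rule ccontr)
  assume "\<not> (e \<in> P \<or> 1 - e \<in> P)"
  have tP: "two_sided_ideal P" using P by (rule maximal_ideal_two_sided)
  let ?I = "{x. \<forall>r. x * r * (1 - e) \<in> P}"
  have "two_sided_ideal ?I"
    by (rule two_sided_ideal_right_quotient) (use tP in \<open>simp add: two_sided_ideal_iff_left_ideal\<close>)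
  moreover have "P \<subseteq> ?I" using two_sided_ideal_mult_right[OF tP] by blast
  moreover have "e \<in> ?I"
    using e jacobson_subset_maximal_ideal[OF P] by (auto simp: right_semicentral_mod_jacobson_def)
  ultimately have "?I = UNIV" using P \<open>\<not> (e \<in> P \<or> 1 - e \<in> P)\<close> unfolding maximal_ideal_def by blast
  then have "1 * 1 * (1 - e) \<in> P" by blast
  with \<open>\<not> (e \<in> P \<or> 1 - e \<in> P)\<close> show False by simp
qed

lemma right_semicentral_mod_jacobson_mult:
  assumes "right_semicentral_mod_jacobson e" "right_semicentral_mod_jacobson f"
  shows "right_semicentral_mod_jacobson (e * f)"
  unfolding right_semicentral_mod_jacobson_def
proof
  fix r
  have "e * f * r * (1 - e * f) = e * (f * r) * (1 - e) + e * (f * (r * e) * (1 - f))"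
    by (simp add: algebra_simps)
  then show "e * f * r * (1 - e * f) \<in> jacobson"
    using assms jacobson_two_sided_ideal two_sided_ideal_add two_sided_ideal_mult_left
    unfolding right_semicentral_mod_jacobson_def by metis
qed

lemma right_semicentral_mod_jacobson_join:
  assumes "right_semicentral_mod_jacobson e" "right_semicentral_mod_jacobson f"
  shows "right_semicentral_mod_jacobson (e + f - e * f)"
  unfolding right_semicentral_mod_jacobson_def
proof
  fix r
  have "(e + f - e * f) * r * (1 - (e + f - e * f)) =
        e * r * (1 - e) * (1 - f) + (1 - e) * (f * (r * (1 - e)) * (1 - f))"
    by (simp add: algebra_simps)
  then show "(e + f - e * f) * r * (1 - (e + f - e * f)) \<in> jacobson"
    using assms jacobson_two_sided_ideal two_sided_ideal_add two_sided_ideal_mult_left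
      two_sided_ideal_mult_right
    unfolding right_semicentral_mod_jacobson_def by metis
qed

text \<open>
  Finite meets and joins: \<open>e = g\<^sub>1 \<cdots> g\<^sub>n\<close> and \<open>1 - e = (1 - g\<^sub>1) \<cdots> (1 - g\<^sub>n)\<close>, respectively,
  written with an existential since the ring need not be commutative.
\<close>

lemma right_semicentral_mod_jacobson_finite_meet:
  assumes "finite I" "\<forall>i\<in>I. right_semicentral_mod_jacobson (g i)"
  shows "\<exists>e. right_semicentral_mod_jacobson e
    \<and> (\<forall>P. two_sided_ideal P \<and> (\<exists>i\<in>I. g i \<in> P) \<longrightarrow> e \<in> P)
    \<and> (\<forall>P. two_sided_ideal P \<and> (\<forall>i\<in>I. 1 - g i \<in> P) \<longrightarrow> 1 - e \<in> P)"
  using assms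
proof (induction I rule: finite_induct)
  case empty
  show ?case
    by (rule exI[of _ 1]) (simp add: right_semicentral_mod_jacobson_def jacobson_two_sided_ideal
        two_sided_ideal_zero)
next
  case (insert j I)
  then obtain e where e: "right_semicentral_mod_jacobson e"
    "\<forall>P. two_sided_ideal P \<and> (\<exists>i\<in>I. g i \<in> P) \<longrightarrow> e \<in> P"
    "\<forall>P. two_sided_ideal P \<and> (\<forall>i\<in>I. 1 - g i \<in> P) \<longrightarrow> 1 - e \<in> P" by auto
  show ?case
  proof (intro exI conjI allI impI)
    show "right_semicentral_mod_jacobson (g j * e)"
      using e(1) insert.prems by (simp add: right_semicentral_mod_jacobson_mult)
    fix P assume "two_sided_ideal P \<and> (\<exists>i\<in>insert j I. g i \<in> P)"
    then show "g j * e \<in> P"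
      using e(2) by (auto intro: two_sided_ideal_mult_left two_sided_ideal_mult_right)
  next
    fix P assume "two_sided_ideal P \<and> (\<forall>i\<in>insert j I. 1 - g i \<in> P)"
    then have "(1 - g j) + g j * (1 - e) \<in> P"
      using e(3) by (auto intro: two_sided_ideal_add two_sided_ideal_mult_left)
    also have "(1 - g j) + g j * (1 - e) = 1 - g j * e" by (simp add: algebra_simps)
    finally show "1 - g j * e \<in> P" .
  qed
qed

lemma right_semicentral_mod_jacobson_finite_join:
  assumes "finite I" "\<forall>i\<in>I. right_semicentral_mod_jacobson (g i)"
  shows "\<exists>e. right_semicentral_mod_jacobson e
    \<and> (\<forall>P. two_sided_ideal P \<and> (\<forall>i\<in>I. g i \<in> P) \<longrightarrow> e \<in> P)
    \<and> (\<forall>P. two_sided_ideal P \<and> (\<exists>i\<in>I. 1 - g i \<in> P) \<longrightarrow> 1 - e \<in> P)"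
  using assms
proof (induction I rule: finite_induct)
  case empty
  show ?case
    by (rule exI[of _ 0]) (simp add: right_semicentral_mod_jacobson_def jacobson_two_sided_ideal
        two_sided_ideal_zero)
next
  case (insert j I)
  then obtain e where e: "right_semicentral_mod_jacobson e"
    "\<forall>P. two_sided_ideal P \<and> (\<forall>i\<in>I. g i \<in> P) \<longrightarrow> e \<in> P"
    "\<forall>P. two_sided_ideal P \<and> (\<exists>i\<in>I. 1 - g i \<in> P) \<longrightarrow> 1 - e \<in> P" by auto
  show ?case
  proof (intro exI conjI allI impI)
    show "right_semicentral_mod_jacobson (g j + e - g j * e)"
      using e(1) insert.prems by (simp add: right_semicentral_mod_jacobson_join)
    fix P assume "two_sided_ideal P \<and> (\<forall>i\<in>insert j I. g i \<in> P)"
    then show "g j + e - g j * e \<in> P"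
      using e(2) by (auto intro: two_sided_ideal_add two_sided_ideal_diff two_sided_ideal_mult_right)
  next
    fix P assume "two_sided_ideal P \<and> (\<exists>i\<in>insert j I. 1 - g i \<in> P)"
    then have "(1 - g j) * (1 - e) \<in> P"
      using e(3) by (auto intro: two_sided_ideal_mult_left two_sided_ideal_mult_right)
    also have "(1 - g j) * (1 - e) = 1 - (g j + e - g j * e)" by (simp add: algebra_simps)
    finally show "1 - (g j + e - g j * e) \<in> P" .
  qed
qed

context
  assumes sep: "\<And>M N :: 'a::ring_1 set. maximal_ideal M \<Longrightarrow> maximal_ideal N \<Longrightarrow> M \<noteq> N \<Longrightarrow>
    \<exists>e. e \<in> M \<and> 1 - e \<in> N \<and> right_semicentral_mod_jacobson e"
begin

lemma separate_maximal_ideal_from_closed_set: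
  fixes N :: "'a set"
  assumes N: "maximal_ideal N" and x: "x \<notin> N"
  shows "\<exists>g. right_semicentral_mod_jacobson g \<and> g \<in> N
    \<and> (\<forall>P. maximal_ideal P \<and> x \<in> P \<longrightarrow> 1 - g \<in> P)"
proof -
  let ?V = "{M. maximal_ideal M \<and> x \<in> M}"
  have "\<exists>f. f \<in> N \<and> 1 - f \<in> M \<and> right_semicentral_mod_jacobson f" if "M \<in> ?V" for M
    using that sep[OF N, of M] x by auto
  then obtain f where f: "\<And>M. M \<in> ?V \<Longrightarrow> f M \<in> N \<and> 1 - f M \<in> M \<and> right_semicentral_mod_jacobson (f M)"
    by metis
  \<comment> \<open>each \<open>P \<in> ?V\<close> is avoided by its own \<open>f P\<close>, as \<open>1 - f P \<in> P\<close>\<close>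
  have "\<exists>M\<in>?V. f M \<notin> P" if "maximal_ideal P" "x \<in> P" for P
    using that f[of P] maximal_ideal_not_both by blast
  then have "\<exists>I. finite I \<and> I \<subseteq> ?V \<and> (\<forall>P. maximal_ideal P \<and> x \<in> P \<longrightarrow> (\<exists>M\<in>I. f M \<notin> P))"
    by (rule maximal_ideals_finite_subcover)
  then obtain I where I: "finite I" "I \<subseteq> ?V"
    and cover: "\<And>P. maximal_ideal P \<Longrightarrow> x \<in> P \<Longrightarrow> \<exists>M\<in>I. f M \<notin> P"
    by blast
  obtain g where g: "right_semicentral_mod_jacobson g"
    "\<forall>P. two_sided_ideal P \<and> (\<forall>M\<in>I. f M \<in> P) \<longrightarrow> g \<in> P"
    "\<forall>P. two_sided_ideal P \<and> (\<exists>M\<in>I. 1 - f M \<in> P) \<longrightarrow> 1 - g \<in> P"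
    using right_semicentral_mod_jacobson_finite_join[OF I(1), of f] f I(2) by blast
  show ?thesis
  proof (intro exI conjI allI impI)
    show "right_semicentral_mod_jacobson g" by (fact g(1))
    show "g \<in> N" using g(2) maximal_ideal_two_sided[OF N] f I(2) by blast
    fix P assume "maximal_ideal P \<and> x \<in> P"
    then have P: "maximal_ideal P" "x \<in> P" by blast+
    then obtain M where "M \<in> I" "f M \<notin> P" using cover by blast
    then have "1 - f M \<in> P"
      using right_semicentral_mod_jacobson_mem_or_one_minus_mem[OF P(1)] f I(2) by blast
    then show "1 - g \<in> P" using g(3) maximal_ideal_two_sided[OF P(1)] \<open>M \<in> I\<close> by blast
  qed
qed

lemma separate_disjoint_closed_sets:
  fixes x y :: 'a
  assumes disjoint: "\<And>P. maximal_ideal P \<Longrightarrow> x \<in> P \<Longrightarrow> y \<notin> P"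
  shows "\<exists>e. right_semicentral_mod_jacobson e
    \<and> (\<forall>P. maximal_ideal P \<and> y \<in> P \<longrightarrow> e \<in> P)
    \<and> (\<forall>P. maximal_ideal P \<and> x \<in> P \<longrightarrow> 1 - e \<in> P)"
proof -
  let ?V = "{N. maximal_ideal N \<and> y \<in> N}"
  have "\<exists>g. right_semicentral_mod_jacobson g \<and> g \<in> N \<and> (\<forall>P. maximal_ideal P \<and> x \<in> P \<longrightarrow> 1 - g \<in> P)"
    if "N \<in> ?V" for N
    using that disjoint by (intro separate_maximal_ideal_from_closed_set) auto
  then obtain g where g: "\<And>N. N \<in> ?V \<Longrightarrow> right_semicentral_mod_jacobson (g N) \<and> g N \<in> N
      \<and> (\<forall>P. maximal_ideal P \<and> x \<in> P \<longrightarrow> 1 - g N \<in> P)"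
    by metis
  have "\<exists>N\<in>?V. 1 - g N \<notin> P" if "maximal_ideal P" "y \<in> P" for P
    using that g[of P] maximal_ideal_not_both by blast
  then have "\<exists>I. finite I \<and> I \<subseteq> ?V \<and> (\<forall>P. maximal_ideal P \<and> y \<in> P \<longrightarrow> (\<exists>N\<in>I. 1 - g N \<notin> P))"
    by (rule maximal_ideals_finite_subcover)
  then obtain I where I: "finite I" "I \<subseteq> ?V"
    and cover: "\<And>P. maximal_ideal P \<Longrightarrow> y \<in> P \<Longrightarrow> \<exists>N\<in>I. 1 - g N \<notin> P"
    by blast
  obtain e where e: "right_semicentral_mod_jacobson e"
    "\<forall>P. two_sided_ideal P \<and> (\<exists>N\<in>I. g N \<in> P) \<longrightarrow> e \<in> P"
    "\<forall>P. two_sided_ideal P \<and> (\<forall>N\<in>I. 1 - g N \<in> P) \<longrightarrow> 1 - e \<in> P"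
    using right_semicentral_mod_jacobson_finite_meet[OF I(1), of g] g I(2) by blast
  show ?thesis
  proof (intro exI conjI allI impI)
    show "right_semicentral_mod_jacobson e" by (fact e(1))
    fix P assume "maximal_ideal P \<and> y \<in> P"
    then have P: "maximal_ideal P" "y \<in> P" by blast+
    then obtain N where "N \<in> I" "1 - g N \<notin> P" using cover by blast
    then have "g N \<in> P"
      using right_semicentral_mod_jacobson_mem_or_one_minus_mem[OF P(1)] g I(2) by blast
    then show "e \<in> P" using e(2) maximal_ideal_two_sided[OF P(1)] \<open>N \<in> I\<close> by blast
  next
    fix P assume P: "maximal_ideal P \<and> x \<in> P"
    then have "\<forall>N\<in>I. 1 - g N \<in> P" using g I(2) by blast
    then show "1 - e \<in> P" using e(3) P maximal_ideal_two_sided by blast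
  qed
qed

lemma feckly_clean_elem_if_maximal_ideals_separated: "feckly_clean_elem (a :: 'a)"
proof -
  have disjoint: "a - 1 \<notin> P" if P: "maximal_ideal P" "a \<in> P" for P
  proof
    assume "a - 1 \<in> P"
    then have "a - (a - 1) \<in> P" by (rule two_sided_ideal_diff[OF maximal_ideal_two_sided[OF P(1)] P(2)])
    then show False using maximal_ideal_one[OF P(1)] by simp
  qed
  have "\<exists>e. right_semicentral_mod_jacobson e
    \<and> (\<forall>P. maximal_ideal P \<and> a - 1 \<in> P \<longrightarrow> e \<in> P)
    \<and> (\<forall>P. maximal_ideal P \<and> a \<in> P \<longrightarrow> 1 - e \<in> P)"
    using disjoint by (rule separate_disjoint_closed_sets)
  then obtain e where e: "right_semicentral_mod_jacobson e"
    "\<And>P. maximal_ideal P \<Longrightarrow> a - 1 \<in> P \<Longrightarrow> e \<in> P"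
    "\<And>P. maximal_ideal P \<Longrightarrow> a \<in> P \<Longrightarrow> 1 - e \<in> P"
    by blast
  have "a - e \<notin> P" if P: "maximal_ideal P" for P
  proof
    assume u: "a - e \<in> P"
    have tP: "two_sided_ideal P" using P by (rule maximal_ideal_two_sided)
    consider "e \<in> P" | "1 - e \<in> P"
      using right_semicentral_mod_jacobson_mem_or_one_minus_mem[OF P e(1)] by blast
    then show False
    proof cases
      case 1
      then have "a \<in> P" using two_sided_ideal_add[OF tP u] by fastforce
      then show False using 1 e(3)[OF P] maximal_ideal_not_both[OF P] by blast
    next
      case 2
      then have "a - 1 \<in> P" using two_sided_ideal_diff[OF tP u] by fastforce
      then show False using 2 e(2)[OF P] maximal_ideal_not_both[OF P] by blast
    qed
  qed
  then have "full (a - e)" by (simp add: full_iff_not_in_maximal_ideal)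
  then show ?thesis using e(1) unfolding feckly_clean_elem_def right_semicentral_mod_jacobson_def
    by (intro exI[of _ e] exI[of _ "a - e"]) simp
qed

end

lemma maximal_ideals_separated_if_feckly_clean_elem:
  assumes fc: "feckly_clean_elem (1 - m)"
    and M: "maximal_ideal M" "m \<in> M" and N: "maximal_ideal N" "1 - m \<in> N"
  shows "\<exists>e. e \<in> M \<and> 1 - e \<in> N \<and> right_semicentral_mod_jacobson e"
proof -
  obtain e u where u: "full u" and split: "1 - m = e + u" and e: "right_semicentral_mod_jacobson e"
    using fc unfolding feckly_clean_elem_def right_semicentral_mod_jacobson_def by blast
  have "u \<notin> M" "u \<notin> N" using u M(1) N(1) by (simp_all add: full_iff_not_in_maximal_ideal)
  have "e \<in> M"
  proof (rule ccontr)
    assume "e \<notin> M"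
    then have "(1 - e) - m \<in> M"
      using right_semicentral_mod_jacobson_mem_or_one_minus_mem[OF M(1) e] M
        two_sided_ideal_diff[OF maximal_ideal_two_sided[OF M(1)]] by blast
    moreover have "(1 - e) - m = u" using split by (simp add: algebra_simps)
    ultimately show False using \<open>u \<notin> M\<close> by simp
  qed
  moreover have "1 - e \<in> N"
  proof (rule ccontr)
    assume "1 - e \<notin> N"
    then have "(1 - m) - e \<in> N"
      using right_semicentral_mod_jacobson_mem_or_one_minus_mem[OF N(1) e] N
        two_sided_ideal_diff[OF maximal_ideal_two_sided[OF N(1)]] by blast
    moreover have "(1 - m) - e = u" using split by (simp add: algebra_simps)
    ultimately show False using \<open>u \<notin> N\<close> by simp
  qed
  ultimately show ?thesis using e by blast
qed

theorem theorem2p6: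
  "feckly_clean TYPE('a::ring_1) \<longleftrightarrow>
     (\<forall>M N :: 'a set. maximal_ideal M \<and> maximal_ideal N \<and> M \<noteq> N \<longrightarrow>
        (\<exists>e. e \<in> M \<and> 1 - e \<in> N \<and> (\<forall>r. e * r * (1 - e) \<in> jacobson)))"
  unfolding right_semicentral_mod_jacobson_def[symmetric]
proof (intro iffI allI impI)
  fix M N :: "'a set"
  assume "feckly_clean TYPE('a)" and MN: "maximal_ideal M \<and> maximal_ideal N \<and> M \<noteq> N"
  then obtain m where "m \<in> M" "1 - m \<in> N" using maximal_ideals_comaximal by blast
  with MN \<open>feckly_clean TYPE('a)\<close> show "\<exists>e. e \<in> M \<and> 1 - e \<in> N \<and> right_semicentral_mod_jacobson e"
    using maximal_ideals_separated_if_feckly_clean_elem unfolding feckly_clean_def by blast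
next
  assume "\<forall>M N :: 'a set. maximal_ideal M \<and> maximal_ideal N \<and> M \<noteq> N \<longrightarrow>
    (\<exists>e. e \<in> M \<and> 1 - e \<in> N \<and> right_semicentral_mod_jacobson e)"
  then show "feckly_clean TYPE('a)"
    unfolding feckly_clean_def using feckly_clean_elem_if_maximal_ideals_separated by blast
qed

end
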